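(* Let $n\ge 1$, $M\ge1$ be integers and $a=(a_0,\dots,a_n)\in\mathbb{Z}^{n+1}$ with $0\le a_i\le M$ and $a_0=a_n=0$. If there exists a non-periodic real-valued tropical recurrent minimal sequence satisfying $a$, then there exists a non-periodic tropical recurrent sequence satisfying $a$ all of whose entries lie in $V=\{j+i/(2n+2): 0\le j<M,\ 0\le i\le 2n+2,\ i,j\in\mathbb{Z}\}$.
   Context: A tropical recurrent sequence is $y=(y_j)_{j\in\mathbb{Z}}$ with real entries; it satisfies $a$ if for every $k\in\mathbb{Z}$ the minimum $\min_{0\le i\le n}\{a_i+y_{i+k}\}$ is attained for at least two different indices $i$; it is minimal if for every $j\in\mathbb{Z}$ there is $k$ with $j-n\le k\le j$ and $a_{j-k}+y_j=\min_{0\le i\le n}\{a_i+y_{i+k}\}$. It is periodic if there is $d\ge1$ with $y_{j+d}=y_j$ for all $j$, and non-periodic otherwise. *)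

theory Defs
  imports Complex_Main
begin

text \<open>Coefficient vector a = (a_0,...,a_n) is given as a function a :: nat => int,
  only the values a 0, ..., a n matter. Sequences are y :: int => real.\<close>

definition trop_min :: "nat \<Rightarrow> (nat \<Rightarrow> int) \<Rightarrow> (int \<Rightarrow> real) \<Rightarrow> int \<Rightarrow> real" where
  "trop_min n a y k = Min ((\<lambda>i. real_of_int (a i) + y (int i + k)) ` {0..n})"

definition trop_satisfies :: "nat \<Rightarrow> (nat \<Rightarrow> int) \<Rightarrow> (int \<Rightarrow> real) \<Rightarrow> bool" where
  "trop_satisfies n a y \<longleftrightarrow>
     (\<forall>k::int. \<exists>i1 i2. i1 \<le> n \<and> i2 \<le> n \<and> i1 \<noteq> i2 \<and>
        real_of_int (a i1) + y (int i1 + k) = trop_min n a y k \<and>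
        real_of_int (a i2) + y (int i2 + k) = trop_min n a y k)"

definition trop_minimal :: "nat \<Rightarrow> (nat \<Rightarrow> int) \<Rightarrow> (int \<Rightarrow> real) \<Rightarrow> bool" where
  "trop_minimal n a y \<longleftrightarrow>
     (\<forall>j::int. \<exists>k::int. j - int n \<le> k \<and> k \<le> j \<and>
        real_of_int (a (nat (j - k))) + y j = trop_min n a y k)"

definition periodic_seq :: "(int \<Rightarrow> real) \<Rightarrow> bool" where
  "periodic_seq y \<longleftrightarrow> (\<exists>d::int. d \<ge> 1 \<and> (\<forall>j. y (j + d) = y j))"

end

theory Submission
  imports Defs
begin

text \<open>
  Since \<open>a\<^sub>0 = a\<^sub>n = 0\<close> and \<open>a \<ge> 0\<close>, every window of \<open>n\<close> consecutive
  terms of a solution \<open>y\<close> contains a global minimum \<open>L\<close> of \<open>y\<close>, and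
  minimality then gives \<open>y \<le> L + M\<close>. A map \<open>x \<mapsto> \<lceil>x - c\<rceil>\<close> is monotone
  and commutes with integer translations, so it turns such solutions into solutions
  with values in \<open>{0..M} \<subseteq> V\<close>. Two periodic sequences that agree on a half-line
  coincide; so it suffices to find two bounded solutions agreeing on a half-line but
  not everywhere, and to choose \<open>c\<close> so that the rounding still separates them.
  Splicing turns two solutions that agree on a window of length \<open>n\<close>, but not
  everywhere, into such a pair. These come from \<open>y\<close>: either rounding \<open>y\<close> down
  to the lattice \<open>{y\<^sub>0, \<dots>, y\<^sub>n\<^sub>-\<^sub>1} + \<int>\<close> changes \<open>y\<close> somewhere
  while fixing the window \<open>0..n-1\<close>, or \<open>y\<close> takes finitely many values, so some
  window repeats, and \<open>y\<close> and a translate of it (distinct, as \<open>y\<close> is not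
  periodic) agree on that window.
\<close>

lemma trop_min_le: "i \<le> n \<Longrightarrow> trop_min n a y k \<le> real_of_int (a i) + y (int i + k)"
  unfolding trop_min_def by (rule Min_le) auto

lemma trop_satisfies_comp:
  assumes mono: "mono \<phi>" and shift: "\<And>z x. \<phi> (real_of_int z + x) = real_of_int z + \<phi> x"
    and sat: "trop_satisfies n a y"
  shows "trop_satisfies n a (\<phi> \<circ> y)"
proof -
  have min_comp: "trop_min n a (\<phi> \<circ> y) k = \<phi> (trop_min n a y k)" for k
  proof -
    have "(\<lambda>i. real_of_int (a i) + (\<phi> \<circ> y) (int i + k)) ` {0..n}
        = \<phi> ` (\<lambda>i. real_of_int (a i) + y (int i + k)) ` {0..n}"
      by (simp add: image_image shift)
    then show ?thesis
      unfolding trop_min_def by (simp add: mono_Min_commute[OF mono])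
  qed
  show ?thesis
    using sat unfolding trop_satisfies_def by (simp add: min_comp shift[symmetric]) metis
qed

lemma trop_satisfies_shift:
  assumes "trop_satisfies n a y"
  shows "trop_satisfies n a (\<lambda>j. y (j + d))"
proof -
  have "trop_min n a (\<lambda>j. y (j + d)) k = trop_min n a y (k + d)" for k
    unfolding trop_min_def by (simp add: add.assoc)
  then show ?thesis
    using assms unfolding trop_satisfies_def by (metis (no_types, lifting) add.assoc)
qed

lemma trop_satisfies_cong_window:
  assumes "trop_satisfies n a y" and "\<And>i. i \<le> n \<Longrightarrow> y' (int i + k) = y (int i + k)"
  shows "\<exists>i1 i2. i1 \<le> n \<and> i2 \<le> n \<and> i1 \<noteq> i2 \<and>
           real_of_int (a i1) + y' (int i1 + k) = trop_min n a y' k \<and>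
           real_of_int (a i2) + y' (int i2 + k) = trop_min n a y' k"
proof -
  have "trop_min n a y' k = trop_min n a y k"
    unfolding trop_min_def using assms(2) by (intro arg_cong[where f = Min] image_cong) auto
  then show ?thesis
    using assms unfolding trop_satisfies_def by (metis (no_types, lifting))
qed

lemma trop_satisfies_splice:
  assumes u: "trop_satisfies n a u" and v: "trop_satisfies n a v"
    and agree: "\<And>i. i < n \<Longrightarrow> u (p + int i) = v (p + int i)"
  shows "trop_satisfies n a (\<lambda>j. if j < p then u j else v j)"
  unfolding trop_satisfies_def
proof
  fix k
  let ?s = "\<lambda>j. if j < p then u j else v j"
  show "\<exists>i1 i2. i1 \<le> n \<and> i2 \<le> n \<and> i1 \<noteq> i2 \<and>
      real_of_int (a i1) + ?s (int i1 + k) = trop_min n a ?s k \<and>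
      real_of_int (a i2) + ?s (int i2 + k) = trop_min n a ?s k"
  proof (cases "k < p")
    case True
    show ?thesis
    proof (rule trop_satisfies_cong_window[OF u])
      fix i assume "i \<le> n"
      then show "?s (int i + k) = u (int i + k)"
        using agree[of "nat (int i + k - p)"] True by auto
    qed
  next
    case False
    then show ?thesis by (intro trop_satisfies_cong_window[OF v]) simp
  qed
qed

lemma periodic_add_mult:
  fixes y :: "int \<Rightarrow> 'a"
  assumes "\<And>j. y (j + d) = y j"
  shows "y (j + m * d) = y j"
proof (induction m arbitrary: j rule: int_induct[where k = 0])
  case (step1 m)
  then show ?case using assms[of "j + m * d"] by (simp add: algebra_simps)
next
  case (step2 m)
  have "y (j + (m - 1) * d) = y (j + (m - 1) * d + d)" using assms by simp
  also have "\<dots> = y j" using step2.IH[of j] by (simp add: algebra_simps)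
  finally show ?case .
qed simp

lemma periodic_seq_eq_if_agree_on_half_line:
  assumes "periodic_seq w1" "periodic_seq w2"
    and agree: "(\<forall>j<p. w1 j = w2 j) \<or> (\<forall>j\<ge>p. w1 j = w2 j)"
  shows "w1 = w2"
proof
  fix j
  obtain d1 d2 where d: "d1 \<ge> 1" "d2 \<ge> 1" "\<And>j. w1 (j + d1) = w1 j" "\<And>j. w2 (j + d2) = w2 j"
    using assms(1,2) unfolding periodic_seq_def by blast
  have period: "w1 (j + m * (d1 * d2)) = w1 j" "w2 (j + m * (d1 * d2)) = w2 j" for j m
    using periodic_add_mult[of w1 d1, OF d(3), of j "m * d2"]
      periodic_add_mult[of w2 d2, OF d(4), of j "m * d1"]
    by (simp_all add: algebra_simps)
  define m where "m = \<bar>j - p\<bar> + 1"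
  have "m \<le> m * (d1 * d2)"
    using d mult_mono[of 1 d1 1 d2] unfolding m_def by simp
  then have "j - m * (d1 * d2) < p" "p \<le> j + m * (d1 * d2)"
    unfolding m_def by linarith+
  with agree period show "w1 j = w2 j"
    by (metis diff_add_cancel)
qed

lemma ceiling_diff_separates:
  fixes x x' L :: real
  assumes "x \<noteq> x'"
  obtains c where "L \<le> c" "c < L + 1" "\<lceil>x - c\<rceil> \<noteq> \<lceil>x' - c\<rceil>"
proof -
  have "\<exists>c. L \<le> c \<and> c < L + 1 \<and> \<lceil>x - c\<rceil> < \<lceil>x' - c\<rceil>" if "x < x'" for x x' :: real
  proof (intro exI conjI)
    let ?c = "x - real_of_int \<lfloor>x - L\<rfloor>"
    show "L \<le> ?c" "?c < L + 1" by linarith+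
    have "real_of_int \<lfloor>x - L\<rfloor> < x' - ?c" using that by simp
    then show "\<lceil>x - ?c\<rceil> < \<lceil>x' - ?c\<rceil>" by (simp add: less_ceiling_iff)
  qed
  then show ?thesis
    using that assms by (metis linorder_neq_iff)
qed

lemma nonperiodic_int_solution_if_agree_on_half_line:
  assumes u: "trop_satisfies n a u" and v: "trop_satisfies n a v"
    and bounded: "\<And>j. L \<le> u j \<and> u j \<le> L + real M" "\<And>j. L \<le> v j \<and> v j \<le> L + real M"
    and agree: "(\<forall>j<p. u j = v j) \<or> (\<forall>j\<ge>p. u j = v j)"
    and differ: "u q \<noteq> v q"
  shows "\<exists>w. trop_satisfies n a w \<and> \<not> periodic_seq w \<and> range w \<subseteq> of_int ` {0..int M}"
proof -
  obtain c where c: "L \<le> c" "c < L + 1" "\<lceil>u q - c\<rceil> \<noteq> \<lceil>v q - c\<rceil>"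
    using ceiling_diff_separates[OF differ] by blast
  define r where "r x = real_of_int \<lceil>x - c\<rceil>" for x
  have r_mono: "mono r" unfolding r_def mono_def by (simp add: ceiling_mono)
  have r_shift: "r (real_of_int z + x) = real_of_int z + r x" for z x
    unfolding r_def using ceiling_add_of_int[of "x - c" z] by (simp add: algebra_simps)
  have r_range: "r x \<in> of_int ` {0..int M}" if "L \<le> x" "x \<le> L + real M" for x
  proof -
    have "0 \<le> \<lceil>x - c\<rceil>" "\<lceil>x - c\<rceil> \<le> int M"
      using that c by (simp_all add: ceiling_le_iff)
    then show ?thesis unfolding r_def by auto
  qed
  have "r \<circ> u \<noteq> r \<circ> v" using c(3) unfolding r_def by (metis comp_apply of_int_eq_iff)
  then have "\<not> periodic_seq (r \<circ> u) \<or> \<not> periodic_seq (r \<circ> v)"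
    using periodic_seq_eq_if_agree_on_half_line[of "r \<circ> u" "r \<circ> v" p] agree by auto
  moreover have "range (r \<circ> u) \<subseteq> of_int ` {0..int M}" "range (r \<circ> v) \<subseteq> of_int ` {0..int M}"
    using r_range bounded by auto
  ultimately show ?thesis
    using trop_satisfies_comp[OF r_mono r_shift] u v by blast
qed

lemma nonperiodic_int_solution_if_agree_on_window:
  assumes u: "trop_satisfies n a u" and v: "trop_satisfies n a v"
    and bounded: "\<And>j. L \<le> u j \<and> u j \<le> L + real M" "\<And>j. L \<le> v j \<and> v j \<le> L + real M"
    and agree: "\<And>i. i < n \<Longrightarrow> u (p + int i) = v (p + int i)"
    and differ: "u q \<noteq> v q"
  shows "\<exists>w. trop_satisfies n a w \<and> \<not> periodic_seq w \<and> range w \<subseteq> of_int ` {0..int M}"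
proof -
  define s where "s j = (if j < p then u j else v j)" for j
  have s: "trop_satisfies n a s"
    unfolding s_def using trop_satisfies_splice[OF u v agree] by simp
  have s_bounded: "L \<le> s j \<and> s j \<le> L + real M" for j
    unfolding s_def using bounded by simp
  show ?thesis
  proof (cases "p \<le> q")
    case True
    show ?thesis
      by (rule nonperiodic_int_solution_if_agree_on_half_line[OF u s bounded(1) s_bounded, of p q])
        (use True differ in \<open>auto simp: s_def\<close>)
  next
    case False
    show ?thesis
      by (rule nonperiodic_int_solution_if_agree_on_half_line[OF v s bounded(2) s_bounded, of p q])
        (use False differ in \<open>auto simp: s_def\<close>)
  qed
qed

definition grid_floor :: "real set \<Rightarrow> real \<Rightarrow> real" where
  "grid_floor B x = Max ((\<lambda>b. b + real_of_int \<lfloor>x - b\<rfloor>) ` B)"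

context
  fixes B :: "real set"
  assumes finite: "finite B" and nonempty: "B \<noteq> {}"
begin

lemma grid_floor_le: "grid_floor B x \<le> x"
proof -
  have "b + real_of_int \<lfloor>x - b\<rfloor> \<le> x" for b
    using of_int_floor_le[of "x - b"] by linarith
  then show ?thesis unfolding grid_floor_def using finite nonempty by simp
qed

lemma grid_floor_eq_iff: "grid_floor B x = x \<longleftrightarrow> (\<exists>b\<in>B. \<exists>z. x = b + real_of_int z)"
proof
  assume "grid_floor B x = x"
  moreover have "grid_floor B x \<in> (\<lambda>b. b + real_of_int \<lfloor>x - b\<rfloor>) ` B"
    unfolding grid_floor_def using finite nonempty by (intro Max_in) auto
  ultimately show "\<exists>b\<in>B. \<exists>z. x = b + real_of_int z" by auto
next
  assume "\<exists>b\<in>B. \<exists>z. x = b + real_of_int z"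
  then obtain b z where "b \<in> B" "x = b + real_of_int z" by blast
  then have "x \<in> (\<lambda>b. b + real_of_int \<lfloor>x - b\<rfloor>) ` B" by force
  then have "x \<le> grid_floor B x" unfolding grid_floor_def using finite by simp
  with grid_floor_le show "grid_floor B x = x" by (rule antisym)
qed

lemma mono_grid_floor: "mono (grid_floor B)"
proof
  fix x x' :: real
  assume "x \<le> x'"
  have "b + real_of_int \<lfloor>x - b\<rfloor> \<le> grid_floor B x'" if "b \<in> B" for b
  proof -
    have "b + real_of_int \<lfloor>x - b\<rfloor> \<le> b + real_of_int \<lfloor>x' - b\<rfloor>"
      using \<open>x \<le> x'\<close> by (simp add: floor_mono)
    also have "\<dots> \<le> grid_floor B x'"
      unfolding grid_floor_def using finite that by simp
    finally show ?thesis .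
  qed
  then show "grid_floor B x \<le> grid_floor B x'"
    unfolding grid_floor_def using finite nonempty by simp
qed

lemma grid_floor_add_of_int: "grid_floor B (real_of_int z + x) = real_of_int z + grid_floor B x"
proof -
  have "(\<lambda>b. b + real_of_int \<lfloor>real_of_int z + x - b\<rfloor>) ` B
      = (+) (real_of_int z) ` (\<lambda>b. b + real_of_int \<lfloor>x - b\<rfloor>) ` B"
  proof -
    have "\<lfloor>real_of_int z + x - b\<rfloor> = z + \<lfloor>x - b\<rfloor>" for b
      using floor_add_int[of "x - b" z] by (simp add: algebra_simps)
    then show ?thesis by (simp add: image_image algebra_simps)
  qed
  then show ?thesis
    unfolding grid_floor_def using finite nonempty
    by (simp add: mono_Max_commute[symmetric] mono_def)
qed

end

lemma finite_range_window_repeats: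
  fixes y :: "int \<Rightarrow> 'a"
  assumes "finite (range y)"
  obtains p d where "d \<ge> 1" "\<And>i. i < n \<Longrightarrow> y (p + int i) = y (p + int i + d)"
proof -
  define window where "window m = map (\<lambda>i. y (int m + int i)) [0..<n]" for m :: nat
  have "range window \<subseteq> {xs. set xs \<subseteq> range y \<and> length xs = n}"
    unfolding window_def by auto
  then have "finite (range window)"
    using finite_lists_length_eq[OF assms] by (rule finite_subset)
  then have "\<not> inj window"
    using finite_imageD by blast
  then obtain m1 m2 where "m1 < m2" "window m1 = window m2"
    unfolding inj_def by (metis linorder_neq_iff)
  then have "y (int m1 + int i) = y (int m1 + int i + (int m2 - int m1))" if "i < n" for i
    using arg_cong[OF \<open>window m1 = window m2\<close>, of "\<lambda>xs. xs ! i"] that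
    unfolding window_def by (simp add: add.commute)
  with \<open>m1 < m2\<close> show ?thesis
    using that[of "int m2 - int m1" "int m1"] by simp
qed

lemma trop_satisfies_ex_le_right:
  assumes "trop_satisfies n a y" "\<forall>i\<le>n. 0 \<le> a i" "a n = 0"
  shows "\<exists>i<n. y (k + int i) \<le> y (k + int n)"
proof -
  obtain i1 i2 where "i1 \<le> n" "i2 \<le> n" "i1 \<noteq> i2"
    "real_of_int (a i1) + y (int i1 + k) = trop_min n a y k"
    "real_of_int (a i2) + y (int i2 + k) = trop_min n a y k"
    using assms(1) unfolding trop_satisfies_def by blast
  then obtain i where i: "i < n" "real_of_int (a i) + y (int i + k) = trop_min n a y k"
    by (metis le_neq_implies_less)
  moreover have "trop_min n a y k \<le> real_of_int (a n) + y (int n + k)"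
    by (rule trop_min_le) simp
  moreover have "0 \<le> a i" using assms(2) \<open>i < n\<close> by simp
  ultimately show ?thesis
    using assms(3) by (intro exI[of _ i]) (auto simp: add.commute)
qed

lemma trop_satisfies_ex_le_left:
  assumes "trop_satisfies n a y" "\<forall>i\<le>n. 0 \<le> a i" "a 0 = 0"
  shows "\<exists>i. 1 \<le> i \<and> i \<le> n \<and> y (k + int i) \<le> y k"
proof -
  obtain i1 i2 where "i1 \<le> n" "i2 \<le> n" "i1 \<noteq> i2"
    "real_of_int (a i1) + y (int i1 + k) = trop_min n a y k"
    "real_of_int (a i2) + y (int i2 + k) = trop_min n a y k"
    using assms(1) unfolding trop_satisfies_def by blast
  then obtain i where i: "1 \<le> i" "i \<le> n" "real_of_int (a i) + y (int i + k) = trop_min n a y k"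
    by (metis less_one not_le)
  moreover have "trop_min n a y k \<le> real_of_int (a 0) + y (int 0 + k)"
    by (rule trop_min_le) simp
  moreover have "0 \<le> a i" using assms(2) \<open>i \<le> n\<close> by simp
  ultimately show ?thesis
    using assms(3) by (intro exI[of _ i]) (auto simp: add.commute)
qed

lemma trop_satisfies_window_min:
  assumes "n \<ge> 1" and sat: "trop_satisfies n a y"
    and a: "\<forall>i\<le>n. 0 \<le> a i" "a 0 = 0" "a n = 0"
  obtains i where "i < n" "\<And>j. y (p + int i) \<le> y j"
proof -
  obtain i0 where "is_arg_min (\<lambda>i. y (p + int i)) (\<lambda>i. i \<in> {..<n}) i0"
    using ex_is_arg_min_if_finite[of "{..<n}"] \<open>n \<ge> 1\<close> by fastforce
  then have i0: "i0 < n" and window: "\<And>i. i < n \<Longrightarrow> y (p + int i0) \<le> y (p + int i)"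
    unfolding is_arg_min_linorder by auto
  have right: "y (p + int i0) \<le> y (p + int m)" for m
  proof (induction m rule: less_induct)
    case (less m)
    show ?case
    proof (cases "m < n")
      case False
      obtain i where i: "i < n" "y (p + int (m - n) + int i) \<le> y (p + int (m - n) + int n)"
        using trop_satisfies_ex_le_right[OF sat a(1,3)] by blast
      have "y (p + int i0) \<le> y (p + int (m - n + i))"
        using less.IH[of "m - n + i"] i(1) False by simp
      also have "p + int (m - n + i) = p + int (m - n) + int i"
        by simp
      also note i(2)
      also have "p + int (m - n) + int n = p + int m"
        using False by simp
      finally show ?thesis .
    qed (use window in simp)
  qed
  have left: "y (p + int i0) \<le> y (p - int m)" for m
  proof (induction m rule: less_induct)
    case (less m)
    obtain i where i: "1 \<le> i" "i \<le> n" "y (p - int m + int i) \<le> y (p - int m)"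
      using trop_satisfies_ex_le_left[OF sat a(1,2)] by blast
    show ?case
    proof (cases "i \<le> m")
      case True
      then have "y (p + int i0) \<le> y (p - int (m - i))"
        using less.IH[of "m - i"] i(1) by (cases "m = 0") simp_all
      with True i(3) show ?thesis by (simp add: of_nat_diff algebra_simps)
    next
      case False
      with right[of "i - m"] i(3) show ?thesis by (simp add: of_nat_diff algebra_simps)
    qed
  qed
  have "y (p + int i0) \<le> y j" for j
    using right[of "nat (j - p)"] left[of "nat (p - j)"] by (cases "p \<le> j") simp_all
  with i0 that show ?thesis by blast
qed

lemma trop_minimal_le_min_add:
  assumes "trop_minimal n a y" and a: "\<forall>i\<le>n. 0 \<le> a i \<and> a i \<le> int M"
    and window_min: "\<And>k. \<exists>i\<le>n. y (k + int i) \<le> L"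
  shows "y j \<le> L + real M"
proof -
  obtain k where k: "j - int n \<le> k" "k \<le> j" "real_of_int (a (nat (j - k))) + y j = trop_min n a y k"
    using assms(1) unfolding trop_minimal_def by blast
  obtain i where "i \<le> n" "y (k + int i) \<le> L"
    using window_min by blast
  moreover have "trop_min n a y k \<le> real_of_int (a i) + y (int i + k)"
    using \<open>i \<le> n\<close> by (rule trop_min_le)
  moreover have "0 \<le> a (nat (j - k))" "a i \<le> int M"
    using a k(1,2) \<open>i \<le> n\<close> by auto
  ultimately show ?thesis
    using k(3) by (simp add: add.commute)
qed

lemma trop_minimal_solution_bounded:
  assumes "n \<ge> 1" and sat: "trop_satisfies n a y" and "trop_minimal n a y"
    and a: "\<forall>i\<le>n. 0 \<le> a i \<and> a i \<le> int M" "a 0 = 0" "a n = 0"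
  obtains L where "L \<in> y ` {0..<int n}" "\<And>j. L \<le> y j \<and> y j \<le> L + real M"
proof -
  have a_nonneg: "\<forall>i\<le>n. 0 \<le> a i" using a(1) by simp
  note window_min = trop_satisfies_window_min[OF \<open>n \<ge> 1\<close> sat a_nonneg a(2,3)]
  obtain i0 where "i0 < n" and min: "\<And>j. y (0 + int i0) \<le> y j"
    using window_min[where p = 0] by blast
  have "\<exists>i\<le>n. y (k + int i) \<le> y (int i0)" for k
  proof -
    obtain i where "i < n" "\<And>j. y (k + int i) \<le> y j"
      using window_min[where p = k] by blast
    then show ?thesis by (intro exI[of _ i]) auto
  qed
  then have "y (int i0) \<le> y j \<and> y j \<le> y (int i0) + real M" for j
    using trop_minimal_le_min_add[OF \<open>trop_minimal n a y\<close> a(1)] min by simp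
  moreover have "y (int i0) \<in> y ` {0..<int n}"
    using \<open>i0 < n\<close> by (intro imageI) simp
  ultimately show ?thesis using that by blast
qed

lemma nonperiodic_int_solution_if_bounded:
  assumes "n \<ge> 1" and sat: "trop_satisfies n a y" and nonperiodic: "\<not> periodic_seq y"
    and bounded: "\<And>j. L \<le> y j \<and> y j \<le> L + real M" and L: "L \<in> y ` {0..<int n}"
  shows "\<exists>w. trop_satisfies n a w \<and> \<not> periodic_seq w \<and> range w \<subseteq> of_int ` {0..int M}"
proof -
  define B where "B = y ` {0..<int n}"
  have B: "finite B" "B \<noteq> {}" unfolding B_def using \<open>n \<ge> 1\<close> by auto
  show ?thesis
  proof (cases "\<exists>q. y q \<noteq> (grid_floor B \<circ> y) q")
    case True
    then obtain q where q: "y q \<noteq> (grid_floor B \<circ> y) q" by blast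
    have v: "trop_satisfies n a (grid_floor B \<circ> y)"
      using trop_satisfies_comp[OF mono_grid_floor grid_floor_add_of_int sat] B by blast
    have fixed: "grid_floor B b = b" if "b \<in> B" for b
      using grid_floor_eq_iff[OF B, of b] that by (metis add_0_right of_int_0)
    have v_bounded: "L \<le> (grid_floor B \<circ> y) j \<and> (grid_floor B \<circ> y) j \<le> L + real M" for j
      unfolding comp_apply
    proof
      show "L \<le> grid_floor B (y j)"
        using monoD[OF mono_grid_floor[OF B], of L "y j"] bounded[of j] fixed L
        unfolding B_def by simp
      show "grid_floor B (y j) \<le> L + real M"
        using grid_floor_le[OF B, of "y j"] bounded[of j] by linarith
    qed
    have "y (0 + int i) = (grid_floor B \<circ> y) (0 + int i)" if "i < n" for i
      using fixed[of "y (int i)"] that unfolding B_def by simp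
    from nonperiodic_int_solution_if_agree_on_window[OF sat v bounded v_bounded this q]
    show ?thesis .
  next
    case False
    have "range y \<subseteq> (\<lambda>(b, z). b + real_of_int z) ` (B \<times> {- int M..int M})"
    proof
      fix x assume "x \<in> range y"
      then obtain j where j: "x = y j" by blast
      then obtain b z where b: "b \<in> B" and z: "x = b + real_of_int z"
        using False grid_floor_eq_iff[OF B, of "y j"] by auto
      have "L \<le> b \<and> b \<le> L + real M"
        using b bounded unfolding B_def by auto
      then have "- int M \<le> z \<and> z \<le> int M"
        using bounded[of j] j z by linarith
      with b z show "x \<in> (\<lambda>(b, z). b + real_of_int z) ` (B \<times> {- int M..int M})"
        by force
    qed
    then have "finite (range y)"
      by (rule finite_subset) (use B(1) in simp)
    then obtain p d where "d \<ge> 1" and window: "\<And>i. i < n \<Longrightarrow> y (p + int i) = y (p + int i + d)"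
      using finite_range_window_repeats[where n = n] by blast
    obtain q where q: "y (q + d) \<noteq> y q"
      using nonperiodic \<open>d \<ge> 1\<close> unfolding periodic_seq_def by blast
    show ?thesis
      using nonperiodic_int_solution_if_agree_on_window
        [OF sat trop_satisfies_shift[OF sat] bounded bounded window not_sym[OF q]] .
  qed
qed

lemma of_int_subset_fraction_grid:
  assumes "M \<ge> 1"
  shows "of_int ` {0..int M} \<subseteq> {real_of_int jj + real_of_int i / real (2 * n + 2) | jj i.
                          0 \<le> jj \<and> jj < int M \<and> 0 \<le> i \<and> i \<le> int (2 * n + 2)}"
proof
  fix x :: real assume "x \<in> of_int ` {0..int M}"
  then obtain l where l: "l \<in> {0..int M}" "x = real_of_int l" by blast
  show "x \<in> {real_of_int jj + real_of_int i / real (2 * n + 2) | jj i.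
                          0 \<le> jj \<and> jj < int M \<and> 0 \<le> i \<and> i \<le> int (2 * n + 2)}"
  proof (cases "l < int M")
    case True
    with l show ?thesis by (intro CollectI exI[of _ l] exI[of _ 0]) simp
  next
    case False
    with l assms show ?thesis
      by (intro CollectI exI[of _ "l - 1"] exI[of _ "int (2 * n + 2)"]) simp
  qed
qed

theorem lemma4:
  fixes n M :: nat and a :: "nat \<Rightarrow> int"
  assumes "n \<ge> 1" and "M \<ge> 1"
    and "\<forall>i\<le>n. 0 \<le> a i \<and> a i \<le> int M"
    and "a 0 = 0" and "a n = 0"
    and "\<exists>y. trop_satisfies n a y \<and> trop_minimal n a y \<and> \<not> periodic_seq y"
  shows "\<exists>y. trop_satisfies n a y \<and> \<not> periodic_seq y \<and>
           (\<forall>j. y j \<in> {real_of_int jj + real_of_int i / real (2 * n + 2) | jj i.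
                          0 \<le> jj \<and> jj < int M \<and> 0 \<le> i \<and> i \<le> int (2 * n + 2)})"
proof -
  obtain y where sat: "trop_satisfies n a y" and "trop_minimal n a y" "\<not> periodic_seq y"
    using assms(6) by blast
  obtain L where "L \<in> y ` {0..<int n}" and bounded: "\<And>j. L \<le> y j \<and> y j \<le> L + real M"
    using trop_minimal_solution_bounded[OF assms(1) sat \<open>trop_minimal n a y\<close> assms(3-5)] by blast
  then obtain w where "trop_satisfies n a w" "\<not> periodic_seq w"
    and "range w \<subseteq> of_int ` {0..int M}"
    using nonperiodic_int_solution_if_bounded[OF assms(1) sat \<open>\<not> periodic_seq y\<close> bounded] by blast
  moreover from this(3) have "w j \<in> {real_of_int jj + real_of_int i / real (2 * n + 2) | jj i.
                          0 \<le> jj \<and> jj < int M \<and> 0 \<le> i \<and> i \<le> int (2 * n + 2)}" for j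
    using of_int_subset_fraction_grid[OF assms(2), of n] by (meson rangeI subsetD)
  ultimately show ?thesis
    by blast
qed

end
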